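(* Let $1\le p<\infty$ and $W\in\mathbb{W}$. Then for every $\epsilon>0$ the space $G_{W,p}(0,\infty)$ contains a subspace that is $(1+\epsilon)$-isomorphic to $\ell_p$. In particular, $G_{W,1}(0,\infty)$ is not reflexive.
   Context: $\lambda$ is Lebesgue measure on $(0,\infty)$ with its usual order, $\Lambda$ the Lebesgue-measurable subsets. For $E,F\in\Lambda$, $\mathbb{MO}(E,F)$ is the set of strictly increasing bijections $m:E\to F$ with $m,m^{-1}$ measure-preserving. $\mathbb{W}$ is the set of nonincreasing measurable $W:(0,\infty)\to(0,\infty)$ with $\lim_{t\to\infty}W(t)=0$, $\int_0^\infty W=\infty$, $\int_0^1W<\infty$. $\|f\|_G=\sup\{(\int_E|f\circ m|(t)^pW(t)\,dt)^{1/p}:E,F\in\Lambda,\ m\in\mathbb{MO}(E,F)\}$ and $G_{W,p}(0,\infty)$ is the space of a.e.-classes of measurable $f:(0,\infty)\to[-\infty,\infty]$ with $\|f\|_G<\infty$. *)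

theory Defs
  imports "HOL-Analysis.Analysis"
begin

definition WeightClass :: "(real \<Rightarrow> real) set" where
  "WeightClass = {W. W \<in> borel_measurable (restrict_space lebesgue {0<..})
     \<and> (\<forall>t>0. W t > 0)
     \<and> (\<forall>s t. 0 < s \<longrightarrow> s \<le> t \<longrightarrow> W t \<le> W s)
     \<and> (W \<longlongrightarrow> 0) at_top
     \<and> (\<integral>\<^sup>+ t\<in>{0<..}. ennreal (W t) \<partial>lebesgue) = \<infinity>
     \<and> (\<integral>\<^sup>+ t\<in>{0<..1}. ennreal (W t) \<partial>lebesgue) < \<infinity>}"

text \<open>The preimage of \<open>A \<subseteq> E\<close> under \<open>m\<^sup>-\<^sup>1\<close> is \<open>m ` A\<close>.\<close>
definition MO :: "real set \<Rightarrow> real set \<Rightarrow> (real \<Rightarrow> real) set" where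
  "MO E F = {m. strict_mono_on E m \<and> bij_betw m E F
     \<and> (\<forall>B \<in> sets lebesgue. B \<subseteq> F \<longrightarrow>
          (m -` B \<inter> E) \<in> sets lebesgue \<and> emeasure lebesgue (m -` B \<inter> E) = emeasure lebesgue B)
     \<and> (\<forall>A \<in> sets lebesgue. A \<subseteq> E \<longrightarrow>
          m ` A \<in> sets lebesgue \<and> emeasure lebesgue (m ` A) = emeasure lebesgue A)}"

text \<open>\<open>G_sup W p f\<close> is \<open>\<parallel>f\<parallel>_G ^ p\<close> (as an extended nonnegative real): the supremum of
  \<open>\<integral>_E |f \<circ> m|^p W\<close> over all admissible \<open>E, F, m\<close>.\<close>
definition G_sup :: "(real \<Rightarrow> real) \<Rightarrow> real \<Rightarrow> (real \<Rightarrow> real) \<Rightarrow> ennreal" where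
  "G_sup W p f = (SUP (E, F, m) \<in> {(E, F, m). E \<in> sets lebesgue \<and> F \<in> sets lebesgue
        \<and> E \<subseteq> {0<..} \<and> F \<subseteq> {0<..} \<and> m \<in> MO E F}.
      (\<integral>\<^sup>+ t\<in>E. ennreal (\<bar>f (m t)\<bar> powr p * W t) \<partial>lebesgue))"

definition G_norm :: "(real \<Rightarrow> real) \<Rightarrow> real \<Rightarrow> (real \<Rightarrow> real) \<Rightarrow> real" where
  "G_norm W p f = (enn2real (G_sup W p f)) powr (1 / p)"

text \<open>Representatives of elements of \<open>G_{W,p}(0,\<infinity>)\<close>: measurable functions on (0,\<infinity>) with finite norm.\<close>
definition G_space :: "(real \<Rightarrow> real) \<Rightarrow> real \<Rightarrow> (real \<Rightarrow> real) set" where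
  "G_space W p = {f. f \<in> borel_measurable (restrict_space lebesgue {0<..}) \<and> G_sup W p f < \<infinity>}"

definition lp_space :: "real \<Rightarrow> (nat \<Rightarrow> real) set" where
  "lp_space p = {x. summable (\<lambda>n. \<bar>x n\<bar> powr p)}"

definition lp_norm :: "real \<Rightarrow> (nat \<Rightarrow> real) \<Rightarrow> real" where
  "lp_norm p x = (\<Sum>n. \<bar>x n\<bar> powr p) powr (1 / p)"

definition dual_space :: "(real \<Rightarrow> real) set \<Rightarrow> ((real \<Rightarrow> real) \<Rightarrow> real) \<Rightarrow> ((real \<Rightarrow> real) \<Rightarrow> real) set" where
  "dual_space V N = {\<phi>. (\<forall>f\<in>V. \<forall>g\<in>V. \<forall>a b. \<phi> (\<lambda>t. a * f t + b * g t) = a * \<phi> f + b * \<phi> g)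
      \<and> (\<exists>C. \<forall>f\<in>V. \<bar>\<phi> f\<bar> \<le> C * N f)}"

definition dual_norm :: "(real \<Rightarrow> real) set \<Rightarrow> ((real \<Rightarrow> real) \<Rightarrow> real) \<Rightarrow> ((real \<Rightarrow> real) \<Rightarrow> real) \<Rightarrow> real" where
  "dual_norm V N \<phi> = Sup ((\<lambda>f. \<bar>\<phi> f\<bar>) ` {f\<in>V. N f \<le> 1})"

definition reflexive_space :: "(real \<Rightarrow> real) set \<Rightarrow> ((real \<Rightarrow> real) \<Rightarrow> real) \<Rightarrow> bool" where
  "reflexive_space V N \<longleftrightarrow>
     (\<forall>\<Phi> :: ((real \<Rightarrow> real) \<Rightarrow> real) \<Rightarrow> real.
        ((\<forall>\<phi>\<in>dual_space V N. \<forall>\<psi>\<in>dual_space V N. \<forall>a b.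
             \<Phi> (\<lambda>f. a * \<phi> f + b * \<psi> f) = a * \<Phi> \<phi> + b * \<Phi> \<psi>)
         \<and> (\<exists>C. \<forall>\<phi>\<in>dual_space V N. \<bar>\<Phi> \<phi>\<bar> \<le> C * dual_norm V N \<phi>))
        \<longrightarrow> (\<exists>f\<in>V. \<forall>\<phi>\<in>dual_space V N. \<Phi> \<phi> = \<phi> f))"

end

theory Submission
  imports Defs
begin

text \<open>
  Choose consecutive blocks \<open>I n = (s n, s n + L n]\<close> (knots \<open>s n\<close>, block lengths \<open>L n\<close>)
  with \<open>L n\<close> so large that the \<open>W\<close>-mass of \<open>(0, s n]\<close> is at most \<open>1 - \<delta>\<close> times that of
  \<open>(0, L n]\<close>; this is possible because \<open>W\<close> has infinite mass. Then the mass \<open>a n\<close> of \<open>I n\<close>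
  is at least \<open>\<delta>\<close> times the mass of \<open>(0, L n]\<close>, while, \<open>W\<close> being nonincreasing, no set of
  measure \<open>L n\<close> carries more mass than \<open>(0, L n]\<close>. Hence for the block function
  \<open>T x = \<Sum>n. x n * a n powr (-1/p) * indicator (I n)\<close> every rearrangement \<open>m\<close> gives
  \<open>\<integral>\<^sub>E |T x \<circ> m| ^ p * W \<le> (\<Sum>n. |x n| ^ p) / \<delta>\<close>, with equality to \<open>\<Sum>n. |x n| ^ p\<close> for
  \<open>m = id\<close>; so \<open>T\<close> distorts the norm of \<open>\<ell>\<^sub>p\<close> by at most \<open>\<delta> powr (-1/p)\<close>.

  For \<open>p = 1\<close> and \<open>\<delta> = 1/2\<close> the images \<open>g k\<close> of the halved unit vectors lie in the unit
  ball, vanish on \<open>(0, k]\<close> and have \<open>\<integral> g k * W = 1/2\<close>. A cluster point \<open>\<Psi>\<close> of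
  \<open>k \<mapsto> (\<phi> \<mapsto> \<phi> (g k))\<close> is a bounded linear functional on the dual; if it were evaluation at
  some \<open>f\<close>, then \<open>\<integral>\<^sub>0\<^sup>n f * W = 0\<close> for all \<open>n\<close> but \<open>\<integral>\<^sub>0\<^sup>\<infinity> f * W = 1/2\<close>, contradicting
  dominated convergence.
\<close>

lemma WeightClassD:
  assumes "W \<in> WeightClass"
  shows "W \<in> borel_measurable (restrict_space lebesgue {0<..})"
    and "0 < t \<Longrightarrow> 0 < W t"
    and "0 < s \<Longrightarrow> s \<le> t \<Longrightarrow> W t \<le> W s"
    and "(\<integral>\<^sup>+ t\<in>{0<..}. ennreal (W t) \<partial>lebesgue) = \<infinity>"
    and "(\<integral>\<^sup>+ t\<in>{0<..1}. ennreal (W t) \<partial>lebesgue) < \<infinity>"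
  using assms unfolding WeightClass_def by auto

lemma weight_indicator_measurable:
  assumes "W \<in> WeightClass" "S \<in> sets lebesgue" "S \<subseteq> {0<..}"
  shows "(\<lambda>t. W t * indicator S t) \<in> borel_measurable lebesgue"
proof -
  have "(\<lambda>t. indicator {0<..} t *\<^sub>R W t) \<in> borel_measurable lebesgue"
    using WeightClassD(1)[OF assms(1)]
      borel_measurable_restrict_space_iff[of "{0<..} :: real set" lebesgue W] by simp
  then have "(\<lambda>t. (indicator {0<..} t *\<^sub>R W t) * indicator S t) \<in> borel_measurable lebesgue"
    using assms(2) by measurable
  moreover have "(\<lambda>t. (indicator {0<..} t *\<^sub>R W t) * indicator S t) = (\<lambda>t. W t * indicator S t)"
    using assms(3) by (auto simp: fun_eq_iff indicator_def)
  ultimately show ?thesis by simp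
qed

lemma weight_indicator_measurable_ennreal:
  assumes "W \<in> WeightClass" "S \<in> sets lebesgue" "S \<subseteq> {0<..}"
  shows "(\<lambda>t. ennreal (W t) * indicator S t) \<in> borel_measurable lebesgue"
proof -
  have "(\<lambda>t. ennreal (W t * indicator S t)) \<in> borel_measurable lebesgue"
    using weight_indicator_measurable[OF assms] by measurable
  moreover have "(\<lambda>t. ennreal (W t * indicator S t)) = (\<lambda>t. ennreal (W t) * indicator S t)"
    by (auto simp: fun_eq_iff indicator_def)
  ultimately show ?thesis by simp
qed

lemma nn_integral_weight_split:
  assumes "W \<in> WeightClass" "A \<in> sets lebesgue" "A \<subseteq> {0<..}" "P \<in> sets lebesgue"
  shows "(\<integral>\<^sup>+ t\<in>A. ennreal (W t) \<partial>lebesgue) =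
    (\<integral>\<^sup>+ t\<in>A \<inter> P. ennreal (W t) \<partial>lebesgue) + (\<integral>\<^sup>+ t\<in>A - P. ennreal (W t) \<partial>lebesgue)"
proof -
  have "(\<integral>\<^sup>+ t\<in>A. ennreal (W t) \<partial>lebesgue) = (\<integral>\<^sup>+ t.
      ennreal (W t) * indicator (A \<inter> P) t + ennreal (W t) * indicator (A - P) t \<partial>lebesgue)"
    by (intro nn_integral_cong) (auto simp: indicator_def)
  also have "\<dots> = (\<integral>\<^sup>+ t\<in>A \<inter> P. ennreal (W t) \<partial>lebesgue) + (\<integral>\<^sup>+ t\<in>A - P. ennreal (W t) \<partial>lebesgue)"
    using assms by (intro nn_integral_add weight_indicator_measurable_ennreal) auto
  finally show ?thesis .
qed

lemma nn_integral_weight_ge: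
  assumes "W \<in> WeightClass" "A \<in> sets lebesgue" "A \<subseteq> {0<..b}"
  shows "ennreal (W b) * emeasure lebesgue A \<le> (\<integral>\<^sup>+ t\<in>A. ennreal (W t) \<partial>lebesgue)"
proof -
  have "ennreal (W b) * indicator A t \<le> ennreal (W t) * indicator A t" for t
    using WeightClassD(3)[OF assms(1), of t b] assms(3) by (auto simp: indicator_def ennreal_leI)
  then have "(\<integral>\<^sup>+ t. ennreal (W b) * indicator A t \<partial>lebesgue) \<le> (\<integral>\<^sup>+ t\<in>A. ennreal (W t) \<partial>lebesgue)"
    by (rule nn_integral_mono)
  then show ?thesis using assms(2) by (simp add: nn_integral_cmult_indicator)
qed

lemma nn_integral_weight_le:
  assumes "W \<in> WeightClass" "A \<in> sets lebesgue" "A \<subseteq> {b..}" "0 < b"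
  shows "(\<integral>\<^sup>+ t\<in>A. ennreal (W t) \<partial>lebesgue) \<le> ennreal (W b) * emeasure lebesgue A"
proof -
  have "ennreal (W t) * indicator A t \<le> ennreal (W b) * indicator A t" for t
    using WeightClassD(3)[OF assms(1), of b t] assms(3,4) by (auto simp: indicator_def ennreal_leI)
  then have "(\<integral>\<^sup>+ t\<in>A. ennreal (W t) \<partial>lebesgue) \<le> (\<integral>\<^sup>+ t. ennreal (W b) * indicator A t \<partial>lebesgue)"
    by (rule nn_integral_mono)
  then show ?thesis using assms(2) by (simp add: nn_integral_cmult_indicator)
qed

lemma emeasure_diff_le_emeasure_diff:
  assumes "A \<in> sets M" "B \<in> sets M" "emeasure M A \<le> emeasure M B" "emeasure M B < \<infinity>"
  shows "emeasure M (A - B) \<le> emeasure M (B - A)"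
proof -
  have "emeasure M (A \<inter> B) + emeasure M (A - B) = emeasure M A"
    using assms(1,2) by (subst plus_emeasure) (auto intro!: arg_cong[where f = "emeasure M"])
  also have "\<dots> \<le> emeasure M B" by (rule assms(3))
  also have "\<dots> = emeasure M (A \<inter> B) + emeasure M (B - A)"
    using assms(1,2) by (subst plus_emeasure) (auto intro!: arg_cong[where f = "emeasure M"])
  finally show ?thesis
    using emeasure_mono[of "A \<inter> B" B M] assms(2,4) ennreal_add_left_cancel_le by auto
qed

lemma nn_integral_weight_le_initial:
  assumes W: "W \<in> WeightClass" and A: "A \<in> sets lebesgue" "A \<subseteq> {0<..}"
    and L: "0 < L" "emeasure lebesgue A \<le> ennreal L"
  shows "(\<integral>\<^sup>+ t\<in>A. ennreal (W t) \<partial>lebesgue) \<le> (\<integral>\<^sup>+ t\<in>{0<..L}. ennreal (W t) \<partial>lebesgue)"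
proof -
  let ?P = "{0<..L}" and ?w = "\<lambda>S. \<integral>\<^sup>+ t\<in>S. ennreal (W t) \<partial>lebesgue"
  have "emeasure lebesgue (A - ?P) \<le> emeasure lebesgue (?P - A)"
    using A L by (intro emeasure_diff_le_emeasure_diff) auto
  then have mass: "ennreal (W L) * emeasure lebesgue (A - ?P) \<le> ennreal (W L) * emeasure lebesgue (?P - A)"
    by (rule mult_left_mono) simp
  have "?w (A - ?P) \<le> ennreal (W L) * emeasure lebesgue (A - ?P)"
    using A L by (intro nn_integral_weight_le[OF W]) auto
  also have "\<dots> \<le> ?w (?P - A)"
    using mass by (rule order_trans) (rule nn_integral_weight_ge[OF W], use A in auto)
  finally have "?w (A - ?P) \<le> ?w (?P - A)" .
  then have "?w (A \<inter> ?P) + ?w (A - ?P) \<le> ?w (?P \<inter> A) + ?w (?P - A)"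
    by (simp add: Int_commute add_left_mono)
  also have "\<dots> = ?w ?P"
    by (rule nn_integral_weight_split[OF W, symmetric]) (use A in auto)
  finally show ?thesis
    by (subst nn_integral_weight_split[OF W A, of ?P]) auto
qed

lemma nn_integral_weight_initial_add:
  assumes "W \<in> WeightClass" "0 \<le> a" "a \<le> b"
  shows "(\<integral>\<^sup>+ t\<in>{0<..b}. ennreal (W t) \<partial>lebesgue) =
    (\<integral>\<^sup>+ t\<in>{0<..a}. ennreal (W t) \<partial>lebesgue) + (\<integral>\<^sup>+ t\<in>{a<..b}. ennreal (W t) \<partial>lebesgue)"
proof -
  have "(\<integral>\<^sup>+ t\<in>{0<..b}. ennreal (W t) \<partial>lebesgue) = (\<integral>\<^sup>+ t\<in>{0<..b} \<inter> {0<..a}. ennreal (W t) \<partial>lebesgue)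
      + (\<integral>\<^sup>+ t\<in>{0<..b} - {0<..a}. ennreal (W t) \<partial>lebesgue)"
    by (rule nn_integral_weight_split[OF assms(1)]) auto
  moreover have "{0<..b} \<inter> {0<..a} = {0<..a}" "{0<..b} - {0<..a} = {a<..b}"
    using assms(2,3) by auto
  ultimately show ?thesis by simp
qed

definition weight_primitive :: "(real \<Rightarrow> real) \<Rightarrow> real \<Rightarrow> real" where
  "weight_primitive W L = enn2real (\<integral>\<^sup>+ t\<in>{0<..L}. ennreal (W t) \<partial>lebesgue)"

lemma nn_integral_weight_initial:
  assumes W: "W \<in> WeightClass"
  shows "(\<integral>\<^sup>+ t\<in>{0<..L}. ennreal (W t) \<partial>lebesgue) = ennreal (weight_primitive W L)"
proof -
  let ?M = "max 1 L"
  have "(\<integral>\<^sup>+ t\<in>{0<..L}. ennreal (W t) \<partial>lebesgue) \<le> (\<integral>\<^sup>+ t\<in>{0<..?M}. ennreal (W t) \<partial>lebesgue)"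
    by (intro nn_set_integral_set_mono) auto
  also have "\<dots> = (\<integral>\<^sup>+ t\<in>{0<..1}. ennreal (W t) \<partial>lebesgue) + (\<integral>\<^sup>+ t\<in>{1<..?M}. ennreal (W t) \<partial>lebesgue)"
    by (rule nn_integral_weight_initial_add[OF W]) auto
  also have "\<dots> \<le> (\<integral>\<^sup>+ t\<in>{0<..1}. ennreal (W t) \<partial>lebesgue) + ennreal (W 1) * emeasure lebesgue {1<..?M}"
    by (intro add_left_mono nn_integral_weight_le[OF W]) auto
  also have "\<dots> < \<infinity>"
    using WeightClassD(5)[OF W] by (simp add: ennreal_mult_less_top)
  finally show ?thesis unfolding weight_primitive_def by (simp add: less_top)
qed

lemma weight_primitive_mono:
  assumes "W \<in> WeightClass" "L \<le> L'"
  shows "weight_primitive W L \<le> weight_primitive W L'"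
proof -
  have "(\<integral>\<^sup>+ t\<in>{0<..L}. ennreal (W t) \<partial>lebesgue) \<le> (\<integral>\<^sup>+ t\<in>{0<..L'}. ennreal (W t) \<partial>lebesgue)"
    using assms(2) by (intro nn_set_integral_set_mono) auto
  then show ?thesis
    unfolding nn_integral_weight_initial[OF assms(1)] by (simp add: weight_primitive_def)
qed

lemma weight_primitive_unbounded:
  assumes W: "W \<in> WeightClass"
  shows "\<exists>n::nat. B \<le> weight_primitive W (real n)"
proof (rule ccontr)
  assume "\<not> ?thesis"
  then have bounded: "weight_primitive W (real n) \<le> B" for n
    by (simp add: not_le less_imp_le)
  have "(\<integral>\<^sup>+ t\<in>{0<..}. ennreal (W t) \<partial>lebesgue) =
      (\<integral>\<^sup>+ t. (SUP n. ennreal (W t) * indicator {0<..real n} t) \<partial>lebesgue)"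
  proof (rule nn_integral_cong)
    fix t :: real
    obtain N :: nat where N: "t \<le> real N" using real_arch_simple by blast
    show "ennreal (W t) * indicator {0<..} t = (SUP n. ennreal (W t) * indicator {0<..real n} t)"
    proof (cases "0 < t")
      case True
      have "(SUP n. ennreal (W t) * indicator {0<..real n} t) = ennreal (W t)"
        by (intro antisym SUP_least SUP_upper2[of N]) (use True N in \<open>auto simp: indicator_def\<close>)
      then show ?thesis using True by simp
    qed simp
  qed
  also have "\<dots> = (SUP n. \<integral>\<^sup>+ t\<in>{0<..real n}. ennreal (W t) \<partial>lebesgue)"
    by (intro nn_integral_monotone_convergence_SUP weight_indicator_measurable_ennreal[OF W])
      (auto simp: incseq_def le_fun_def indicator_def)
  also have "\<dots> \<le> ennreal B"
    using bounded by (intro SUP_least) (simp add: nn_integral_weight_initial[OF W] ennreal_leI)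
  finally show False using WeightClassD(4)[OF W] by (simp add: top_unique)
qed

lemma MO_preimage:
  assumes "m \<in> MO E F" "F \<in> sets lebesgue" "B \<in> sets lebesgue"
  shows "m -` B \<inter> E \<in> sets lebesgue"
    and "emeasure lebesgue (m -` B \<inter> E) \<le> emeasure lebesgue B"
proof -
  have maps: "bij_betw m E F"
    using assms(1) unfolding MO_def by blast
  have "B \<inter> F \<in> sets lebesgue" "B \<inter> F \<subseteq> F"
    using assms(2,3) by auto
  then have preserves: "(m -` (B \<inter> F) \<inter> E) \<in> sets lebesgue
      \<and> emeasure lebesgue (m -` (B \<inter> F) \<inter> E) = emeasure lebesgue (B \<inter> F)"
    using assms(1) unfolding MO_def by blast
  have "m -` (B \<inter> F) \<inter> E = m -` B \<inter> E"
    using bij_betwE[OF maps] by blast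
  then have "m -` B \<inter> E \<in> sets lebesgue"
    and "emeasure lebesgue (m -` B \<inter> E) = emeasure lebesgue (B \<inter> F)"
    using preserves by simp_all
  moreover have "emeasure lebesgue (B \<inter> F) \<le> emeasure lebesgue B"
    using assms(3) by (intro emeasure_mono) auto
  ultimately show "m -` B \<inter> E \<in> sets lebesgue"
    and "emeasure lebesgue (m -` B \<inter> E) \<le> emeasure lebesgue B"
    by simp_all
qed

lemma id_MO: "id \<in> MO {0<..} {0<..}"
  unfolding MO_def by (auto simp: strict_mono_on_def Int_absorb2)

lemma nn_integral_le_G_sup:
  "(\<integral>\<^sup>+ t\<in>{0<..}. ennreal (\<bar>f t\<bar> powr p * W t) \<partial>lebesgue) \<le> G_sup W p f"
proof -
  have "({0<..}, {0<..}, id) \<in> {(E, F, m). E \<in> sets lebesgue \<and> F \<in> sets lebesgue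
      \<and> E \<subseteq> {0<..} \<and> F \<subseteq> {0<..} \<and> m \<in> MO E F}"
    using id_MO by simp
  then show ?thesis unfolding G_sup_def by (rule SUP_upper2) simp
qed

lemma sums_times_indicator_disjoint:
  fixes f :: "nat \<Rightarrow> 'a::{t2_space, topological_comm_monoid_add, semiring_1}"
  assumes "disjoint_family B" "u \<in> B k"
  shows "(\<lambda>n. f n * indicator (B n) u) sums f k"
proof -
  have "(\<lambda>n. f n * indicator (B n) u) = (\<lambda>n. if n = k then f n else 0)"
  proof
    fix n
    show "f n * indicator (B n) u = (if n = k then f n else 0)"
    proof (cases "n = k")
      case False
      then have "u \<notin> B n" using assms unfolding disjoint_family_on_def by blast
      then show ?thesis using False by simp
    qed (use assms(2) in simp)
  qed
  then show ?thesis using sums_single[of k f] by simp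
qed

locale block_embedding =
  fixes W :: "real \<Rightarrow> real" and \<delta> p :: real
  assumes weight: "W \<in> WeightClass"
    and delta_pos: "0 < \<delta>" and delta_less_1: "\<delta> < 1" and p_ge_1: "1 \<le> p"
begin

definition block_length :: "real \<Rightarrow> real" where
  "block_length s = (SOME L. 1 \<le> L \<and> weight_primitive W s \<le> (1 - \<delta>) * weight_primitive W L)"

lemma block_length:
  "1 \<le> block_length s \<and> weight_primitive W s \<le> (1 - \<delta>) * weight_primitive W (block_length s)"
proof -
  obtain n :: nat where n: "weight_primitive W s / (1 - \<delta>) \<le> weight_primitive W (real n)"
    using weight_primitive_unbounded[OF weight] by blast
  define L where "L = max 1 (real n)"
  have "weight_primitive W (real n) \<le> weight_primitive W L"
    unfolding L_def by (rule weight_primitive_mono[OF weight]) simp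
  with n have "weight_primitive W s / (1 - \<delta>) \<le> weight_primitive W L"
    by (rule order_trans)
  then have "weight_primitive W s \<le> (1 - \<delta>) * weight_primitive W L"
    using delta_less_1 by (simp add: pos_divide_le_eq mult.commute)
  moreover have "1 \<le> L" unfolding L_def by simp
  ultimately have "1 \<le> L \<and> weight_primitive W s \<le> (1 - \<delta>) * weight_primitive W L" by simp
  then show ?thesis
    unfolding block_length_def
    by (rule someI[of "\<lambda>L. 1 \<le> L \<and> weight_primitive W s \<le> (1 - \<delta>) * weight_primitive W L"])
qed

lemmas block_length_ge_1 = block_length[THEN conjunct1]
lemmas weight_primitive_le_block_length = block_length[THEN conjunct2]

lemma block_length_pos: "0 < block_length s"
  using block_length_ge_1[of s] by simp

primrec knot :: "nat \<Rightarrow> real" where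
  "knot 0 = 0"
| "knot (Suc n) = knot n + block_length (knot n)"

lemma knot_ge: "real n \<le> knot n"
proof (induction n)
  case (Suc n)
  then show ?case using block_length_ge_1[of "knot n"] by simp
qed simp

lemma incseq_knot: "incseq knot"
proof (rule incseq_SucI)
  show "knot n \<le> knot (Suc n)" for n
    using block_length_pos[of "knot n"] by simp
qed

definition block :: "nat \<Rightarrow> real set" where
  "block n = {knot n<..knot (Suc n)}"

lemma block_sets [measurable]: "block n \<in> sets lebesgue"
  unfolding block_def by simp

lemma block_subset: "block n \<subseteq> {0<..knot (Suc n)}"
  using knot_ge[of n] unfolding block_def by auto

lemma block_pos: "block n \<subseteq> {0<..}"
  using block_subset[of n] by auto

lemma block_gt: "u \<in> block n \<Longrightarrow> real n < u"
  using knot_ge[of n] unfolding block_def by auto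

lemma disjoint_family_block: "disjoint_family block"
proof -
  have "block m \<inter> block n = {}" if "m < n" for m n
    using incseq_knot[THEN incseqD, of "Suc m" n] that unfolding block_def by auto
  then show ?thesis
    unfolding disjoint_family_on_def by (metis Int_commute linorder_neqE_nat)
qed

lemma emeasure_block: "emeasure lebesgue (block n) = ennreal (block_length (knot n))"
  using block_length_ge_1[of "knot n"] unfolding block_def by simp

definition block_mass :: "nat \<Rightarrow> real" where
  "block_mass n = enn2real (\<integral>\<^sup>+ t\<in>block n. ennreal (W t) \<partial>lebesgue)"

lemma nn_integral_block: "(\<integral>\<^sup>+ t\<in>block n. ennreal (W t) \<partial>lebesgue) = ennreal (block_mass n)"
proof -
  have "(\<integral>\<^sup>+ t\<in>block n. ennreal (W t) \<partial>lebesgue) \<le> (\<integral>\<^sup>+ t\<in>{0<..knot (Suc n)}. ennreal (W t) \<partial>lebesgue)"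
    by (rule nn_set_integral_set_mono[OF block_subset])
  also have "\<dots> = ennreal (weight_primitive W (knot (Suc n)))"
    by (rule nn_integral_weight_initial[OF weight])
  finally have "(\<integral>\<^sup>+ t\<in>block n. ennreal (W t) \<partial>lebesgue) < top"
    by (rule le_less_trans) simp
  then show ?thesis
    unfolding block_mass_def by (rule ennreal_enn2real[symmetric])
qed

lemma block_mass_ge: "\<delta> * weight_primitive W (block_length (knot n)) \<le> block_mass n"
proof -
  have "(\<integral>\<^sup>+ t\<in>{0<..knot (Suc n)}. ennreal (W t) \<partial>lebesgue) =
      (\<integral>\<^sup>+ t\<in>{0<..knot n}. ennreal (W t) \<partial>lebesgue) + (\<integral>\<^sup>+ t\<in>block n. ennreal (W t) \<partial>lebesgue)"
    unfolding block_def using knot_ge[of n] incseq_knot[THEN incseqD, of n "Suc n"]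
    by (intro nn_integral_weight_initial_add[OF weight]) auto
  then have "ennreal (weight_primitive W (knot (Suc n))) =
      ennreal (weight_primitive W (knot n)) + ennreal (block_mass n)"
    by (simp only: nn_integral_weight_initial[OF weight] nn_integral_block)
  moreover have "0 \<le> weight_primitive W L" "0 \<le> block_mass n" for L
    unfolding weight_primitive_def block_mass_def by simp_all
  ultimately have "weight_primitive W (knot (Suc n)) = weight_primitive W (knot n) + block_mass n"
    by (simp flip: ennreal_plus)
  moreover have "weight_primitive W (block_length (knot n)) \<le> weight_primitive W (knot (Suc n))"
    using knot_ge[of n] by (intro weight_primitive_mono[OF weight]) simp
  ultimately show ?thesis
    using weight_primitive_le_block_length[of "knot n"] by (simp add: algebra_simps)
qed

lemma block_mass_pos: "0 < block_mass n"
proof -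
  have "ennreal (W (knot (Suc n))) * emeasure lebesgue (block n) \<le> ennreal (block_mass n)"
    unfolding nn_integral_block[symmetric] by (intro nn_integral_weight_ge[OF weight] block_subset) simp
  moreover have "0 < W (knot (Suc n))"
    using knot_ge[of "Suc n"] by (intro WeightClassD(2)[OF weight]) simp
  ultimately have "ennreal (W (knot (Suc n)) * block_length (knot n)) \<le> ennreal (block_mass n)"
    using block_length_pos[of "knot n"] by (simp add: emeasure_block flip: ennreal_mult)
  then have "W (knot (Suc n)) * block_length (knot n) \<le> block_mass n"
    by (subst (asm) ennreal_le_iff) (simp_all add: block_mass_def)
  moreover have "0 < W (knot (Suc n)) * block_length (knot n)"
    using \<open>0 < W (knot (Suc n))\<close> block_length_pos[of "knot n"] by simp
  ultimately show ?thesis by linarith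
qed

lemma nn_integral_weight_le_block_mass:
  assumes "A \<in> sets lebesgue" "A \<subseteq> {0<..}" "emeasure lebesgue A \<le> emeasure lebesgue (block n)"
  shows "(\<integral>\<^sup>+ t\<in>A. ennreal (W t) \<partial>lebesgue) \<le> ennreal (block_mass n / \<delta>)"
proof -
  have "(\<integral>\<^sup>+ t\<in>A. ennreal (W t) \<partial>lebesgue) \<le> (\<integral>\<^sup>+ t\<in>{0<..block_length (knot n)}. ennreal (W t) \<partial>lebesgue)"
    using assms block_length_pos[of "knot n"] emeasure_block[of n]
    by (intro nn_integral_weight_le_initial[OF weight]) auto
  also have "\<dots> = ennreal (weight_primitive W (block_length (knot n)))"
    by (rule nn_integral_weight_initial[OF weight])
  also have "\<dots> \<le> ennreal (block_mass n / \<delta>)"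
    using block_mass_ge[of n] delta_pos by (intro ennreal_leI) (simp add: field_simps)
  finally show ?thesis .
qed

definition block_scale :: "nat \<Rightarrow> real" where
  "block_scale n = block_mass n powr (-1 / p)"

lemma block_scale_powr: "block_scale n powr p = 1 / block_mass n"
proof -
  have "block_scale n powr p = block_mass n powr (-1 / p * p)"
    unfolding block_scale_def by (simp add: powr_powr)
  also have "-1 / p * p = -1" using p_ge_1 by simp
  finally show ?thesis using block_mass_pos[of n] by (simp add: powr_minus_divide)
qed

lemma block_scale_pos: "0 < block_scale n"
  using block_mass_pos[of n] unfolding block_scale_def by simp

definition embed :: "(nat \<Rightarrow> real) \<Rightarrow> real \<Rightarrow> real" where
  "embed x u = (\<Sum>n. x n * block_scale n * indicator (block n) u)"

lemma embed_sums: "(\<lambda>n. x n * block_scale n * indicator (block n) u) sums embed x u"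
proof (cases "\<exists>k. u \<in> block k")
  case True
  then obtain k where "u \<in> block k" ..
  then have "(\<lambda>n. x n * block_scale n * indicator (block n) u) sums (x k * block_scale k)"
    by (rule sums_times_indicator_disjoint[OF disjoint_family_block])
  then show ?thesis unfolding embed_def by (auto simp: sums_iff)
qed (simp add: embed_def)

lemma embed_block: "u \<in> block k \<Longrightarrow> embed x u = x k * block_scale k"
  by (rule sums_unique2[OF embed_sums sums_times_indicator_disjoint[OF disjoint_family_block]])

lemma embed_outside: "(\<And>k. u \<notin> block k) \<Longrightarrow> embed x u = 0"
  by (simp add: embed_def)

lemma embed_measurable: "embed x \<in> borel_measurable lebesgue"
proof (rule borel_measurable_LIMSEQ_real)
  show "(\<lambda>i. \<Sum>n<i. x n * block_scale n * indicator (block n) u) \<longlonglongrightarrow> embed x u" for u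
    using embed_sums[of x u] unfolding sums_def .
qed measurable

lemma embed_linear: "embed (\<lambda>n. a * x n + b * y n) = (\<lambda>u. a * embed x u + b * embed y u)"
proof
  fix u
  show "embed (\<lambda>n. a * x n + b * y n) u = a * embed x u + b * embed y u"
  proof (cases "\<exists>k. u \<in> block k")
    case True
    then obtain k where "u \<in> block k" ..
    then show ?thesis by (simp add: embed_block algebra_simps)
  qed (simp add: embed_outside)
qed

lemma powr_embed:
  assumes "u \<in> block k"
  shows "\<bar>embed x u\<bar> powr p = \<bar>x k\<bar> powr p / block_mass k"
proof -
  have "\<bar>embed x u\<bar> powr p = \<bar>x k\<bar> powr p * block_scale k powr p"
    using block_scale_pos[of k] by (simp add: embed_block[OF assms] abs_mult powr_mult)
  then show ?thesis by (simp add: block_scale_powr)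
qed

lemma nn_integral_embed_comp:
  assumes E: "E \<in> sets lebesgue" "E \<subseteq> {0<..}" and m: "\<And>n. m -` block n \<inter> E \<in> sets lebesgue"
  shows "(\<integral>\<^sup>+ t\<in>E. ennreal (\<bar>embed x (m t)\<bar> powr p * W t) \<partial>lebesgue) =
    (\<Sum>n. ennreal (\<bar>x n\<bar> powr p / block_mass n) * (\<integral>\<^sup>+ t\<in>m -` block n \<inter> E. ennreal (W t) \<partial>lebesgue))"
proof -
  let ?c = "\<lambda>n. ennreal (\<bar>x n\<bar> powr p / block_mass n)"
  have pointwise: "ennreal (\<bar>embed x (m t)\<bar> powr p * W t) * indicator E t =
      (\<Sum>n. ?c n * (ennreal (W t) * indicator (m -` block n \<inter> E) t))" for t
  proof (cases "t \<in> E \<and> (\<exists>k. m t \<in> block k)")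
    case True
    then obtain k where t: "t \<in> E" and k: "m t \<in> block k" by blast
    have "(\<lambda>n. ?c n * (ennreal (W t) * indicator (m -` block n \<inter> E) t)) =
        (\<lambda>n. (?c n * ennreal (W t)) * indicator (block n) (m t))"
      using t by (simp add: fun_eq_iff indicator_def)
    then have sum: "(\<Sum>n. ?c n * (ennreal (W t) * indicator (m -` block n \<inter> E) t)) = ?c k * ennreal (W t)"
      using sums_unique[OF sums_times_indicator_disjoint[OF disjoint_family_block k,
          where f = "\<lambda>n. ?c n * ennreal (W t)"]] by simp
    have "0 \<le> W t" using t E(2) WeightClassD(2)[OF weight, of t] by force
    then have "ennreal (\<bar>embed x (m t)\<bar> powr p * W t) = ?c k * ennreal (W t)"
      using block_mass_pos[of k] by (simp add: powr_embed[OF k] flip: ennreal_mult)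
    then show ?thesis using t sum by simp
  next
    case False
    then have "indicator (m -` block n \<inter> E) t = (0::ennreal)" for n
      by (auto simp: indicator_def)
    moreover have "ennreal (\<bar>embed x (m t)\<bar> powr p * W t) * indicator E t = 0"
    proof (cases "t \<in> E")
      case True
      then have "embed x (m t) = 0" using False by (intro embed_outside) auto
      then show ?thesis by simp
    qed simp
    ultimately show ?thesis by simp
  qed
  have integrand_measurable: "(\<lambda>t. ennreal (W t) * indicator (m -` block n \<inter> E) t) \<in> borel_measurable lebesgue" for n
    using E m by (intro weight_indicator_measurable_ennreal[OF weight]) auto
  have "(\<integral>\<^sup>+ t\<in>E. ennreal (\<bar>embed x (m t)\<bar> powr p * W t) \<partial>lebesgue) =
      (\<integral>\<^sup>+ t. (\<Sum>n. ?c n * (ennreal (W t) * indicator (m -` block n \<inter> E) t)) \<partial>lebesgue)"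
    by (rule nn_integral_cong) (rule pointwise)
  also have "\<dots> = (\<Sum>n. \<integral>\<^sup>+ t. ?c n * (ennreal (W t) * indicator (m -` block n \<inter> E) t) \<partial>lebesgue)"
    by (rule nn_integral_suminf, rule borel_measurable_times_ennreal[OF borel_measurable_const integrand_measurable])
  also have "\<dots> = (\<Sum>n. ?c n * (\<integral>\<^sup>+ t\<in>m -` block n \<inter> E. ennreal (W t) \<partial>lebesgue))"
    by (rule suminf_cong, rule nn_integral_cmult[OF integrand_measurable])
  finally show ?thesis .
qed

lemma G_sup_embed_le:
  assumes x: "summable (\<lambda>n. \<bar>x n\<bar> powr p)"
  shows "G_sup W p (embed x) \<le> ennreal ((\<Sum>n. \<bar>x n\<bar> powr p) / \<delta>)"
  unfolding G_sup_def
proof (rule SUP_least)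
  fix z assume "z \<in> {(E, F, m). E \<in> sets lebesgue \<and> F \<in> sets lebesgue
    \<and> E \<subseteq> {0<..} \<and> F \<subseteq> {0<..} \<and> m \<in> MO E F}"
  then obtain E F m where z: "z = (E, F, m)" and E: "E \<in> sets lebesgue" "E \<subseteq> {0<..}"
    and F: "F \<in> sets lebesgue" and m: "m \<in> MO E F" by auto
  note preimage = MO_preimage[OF m F block_sets]
  have "(\<integral>\<^sup>+ t\<in>E. ennreal (\<bar>embed x (m t)\<bar> powr p * W t) \<partial>lebesgue) =
      (\<Sum>n. ennreal (\<bar>x n\<bar> powr p / block_mass n) * (\<integral>\<^sup>+ t\<in>m -` block n \<inter> E. ennreal (W t) \<partial>lebesgue))"
    by (rule nn_integral_embed_comp[OF E preimage(1)])
  also have "\<dots> \<le> (\<Sum>n. ennreal (\<bar>x n\<bar> powr p / \<delta>))"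
  proof (intro suminf_le summableI)
    fix n
    have "(\<integral>\<^sup>+ t\<in>m -` block n \<inter> E. ennreal (W t) \<partial>lebesgue) \<le> ennreal (block_mass n / \<delta>)"
      by (rule nn_integral_weight_le_block_mass) (use preimage E(2) in auto)
    then have "ennreal (\<bar>x n\<bar> powr p / block_mass n) * (\<integral>\<^sup>+ t\<in>m -` block n \<inter> E. ennreal (W t) \<partial>lebesgue)
        \<le> ennreal (\<bar>x n\<bar> powr p / block_mass n) * ennreal (block_mass n / \<delta>)"
      by (rule mult_left_mono) simp
    also have "\<dots> = ennreal (\<bar>x n\<bar> powr p / block_mass n * (block_mass n / \<delta>))"
      by (rule ennreal_mult[symmetric]) (use block_mass_pos[of n] delta_pos in auto)
    also have "\<bar>x n\<bar> powr p / block_mass n * (block_mass n / \<delta>) = \<bar>x n\<bar> powr p / \<delta>"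
      using block_mass_pos[of n] by simp
    finally show "ennreal (\<bar>x n\<bar> powr p / block_mass n) * (\<integral>\<^sup>+ t\<in>m -` block n \<inter> E. ennreal (W t) \<partial>lebesgue)
        \<le> ennreal (\<bar>x n\<bar> powr p / \<delta>)" .
  qed
  also have "\<dots> = ennreal (\<Sum>n. \<bar>x n\<bar> powr p / \<delta>)"
    by (rule suminf_ennreal2) (use x delta_pos in \<open>auto intro: summable_divide\<close>)
  also have "(\<Sum>n. \<bar>x n\<bar> powr p / \<delta>) = (\<Sum>n. \<bar>x n\<bar> powr p) / \<delta>"
    by (rule suminf_divide[OF x])
  finally show "(case z of (E, F, m) \<Rightarrow> \<integral>\<^sup>+ t\<in>E. ennreal (\<bar>embed x (m t)\<bar> powr p * W t) \<partial>lebesgue)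
      \<le> ennreal ((\<Sum>n. \<bar>x n\<bar> powr p) / \<delta>)" unfolding z by simp
qed

lemma G_sup_embed_ge:
  assumes x: "summable (\<lambda>n. \<bar>x n\<bar> powr p)"
  shows "ennreal (\<Sum>n. \<bar>x n\<bar> powr p) \<le> G_sup W p (embed x)"
proof -
  have "ennreal (\<Sum>n. \<bar>x n\<bar> powr p) = (\<Sum>n. ennreal (\<bar>x n\<bar> powr p))"
    using x by (intro suminf_ennreal2[symmetric]) auto
  also have "\<dots> = (\<Sum>n. ennreal (\<bar>x n\<bar> powr p / block_mass n) *
      (\<integral>\<^sup>+ t\<in>id -` block n \<inter> {0<..}. ennreal (W t) \<partial>lebesgue))"
  proof (rule suminf_cong)
    fix n
    have "id -` block n \<inter> {0<..} = block n" using block_pos[of n] by auto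
    then show "ennreal (\<bar>x n\<bar> powr p) = ennreal (\<bar>x n\<bar> powr p / block_mass n) *
        (\<integral>\<^sup>+ t\<in>id -` block n \<inter> {0<..}. ennreal (W t) \<partial>lebesgue)"
      using block_mass_pos[of n] by (simp add: nn_integral_block flip: ennreal_mult)
  qed
  also have "\<dots> = (\<integral>\<^sup>+ t\<in>{0<..}. ennreal (\<bar>embed x (id t)\<bar> powr p * W t) \<partial>lebesgue)"
    by (rule nn_integral_embed_comp[symmetric]) auto
  also have "\<dots> \<le> G_sup W p (embed x)"
    using nn_integral_le_G_sup by simp
  finally show ?thesis .
qed

lemma embed_bounds:
  assumes x: "x \<in> lp_space p"
  shows "embed x \<in> G_space W p"
    and "lp_norm p x \<le> G_norm W p (embed x)"
    and "G_norm W p (embed x) \<le> \<delta> powr (-1 / p) * lp_norm p x"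
proof -
  have summable: "summable (\<lambda>n. \<bar>x n\<bar> powr p)" using x unfolding lp_space_def by simp
  define S where "S = (\<Sum>n. \<bar>x n\<bar> powr p)"
  have "0 \<le> S" unfolding S_def using summable by (intro suminf_nonneg) auto
  have upper: "G_sup W p (embed x) \<le> ennreal (S / \<delta>)"
    using G_sup_embed_le[OF summable] unfolding S_def .
  then have finite: "G_sup W p (embed x) < top"
    by (rule le_less_trans) simp
  then show "embed x \<in> G_space W p"
    unfolding G_space_def using measurable_restrict_space1[OF embed_measurable] by simp
  define g where "g = enn2real (G_sup W p (embed x))"
  have "S \<le> g"
    unfolding g_def S_def
    using enn2real_mono[OF G_sup_embed_ge[OF summable] finite] summable by (simp add: suminf_nonneg)
  moreover have "g \<le> S / \<delta>"
    unfolding g_def using enn2real_mono[OF upper] \<open>0 \<le> S\<close> delta_pos by simp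
  moreover have "0 < 1 / p" using p_ge_1 by simp
  ultimately have "S powr (1 / p) \<le> g powr (1 / p)" and "g powr (1 / p) \<le> (S / \<delta>) powr (1 / p)"
    using \<open>0 \<le> S\<close> by (simp_all add: powr_mono2)
  moreover have "(S / \<delta>) powr (1 / p) = \<delta> powr (-1 / p) * S powr (1 / p)"
    using \<open>0 \<le> S\<close> delta_pos by (simp add: powr_divide powr_minus_divide)
  ultimately show "lp_norm p x \<le> G_norm W p (embed x)"
    and "G_norm W p (embed x) \<le> \<delta> powr (-1 / p) * lp_norm p x"
    unfolding lp_norm_def G_norm_def g_def[symmetric] S_def[symmetric] by simp_all
qed

lemma integral_weight_block: "(\<integral> t. W t * indicator (block k) t \<partial>lebesgue) = block_mass k"
proof -
  have "(\<integral> t. W t * indicator (block k) t \<partial>lebesgue) =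
      enn2real (\<integral>\<^sup>+ t. ennreal (W t * indicator (block k) t) \<partial>lebesgue)"
    using block_pos[of k] WeightClassD(2)[OF weight]
    by (intro integral_eq_nn_integral weight_indicator_measurable[OF weight] AE_I2)
      (auto simp: indicator_def intro: less_imp_le)
  also have "(\<integral>\<^sup>+ t. ennreal (W t * indicator (block k) t) \<partial>lebesgue) = ennreal (block_mass k)"
    unfolding nn_integral_block[symmetric] by (intro nn_integral_cong) (simp add: indicator_def)
  finally show ?thesis using block_mass_pos[of k] by simp
qed

end

theorem lp_almost_isometric_embedding:
  assumes p: "1 \<le> p" and W: "W \<in> WeightClass" and \<epsilon>: "0 < \<epsilon>"
  shows "\<exists>T :: (nat \<Rightarrow> real) \<Rightarrow> (real \<Rightarrow> real).
            (\<forall>x\<in>lp_space p. T x \<in> G_space W p)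
          \<and> (\<forall>x\<in>lp_space p. \<forall>y\<in>lp_space p. \<forall>a b.
               T (\<lambda>n. a * x n + b * y n) = (\<lambda>t. a * T x t + b * T y t))
          \<and> (\<forall>x\<in>lp_space p. lp_norm p x \<le> G_norm W p (T x)
               \<and> G_norm W p (T x) \<le> (1 + \<epsilon>) * lp_norm p x)"
proof -
  define \<delta> where "\<delta> = (1 + \<epsilon>) powr (-p)"
  have "(1 + \<epsilon>) powr (-p) < (1 + \<epsilon>) powr 0"
    using \<epsilon> p by (intro powr_less_mono) auto
  then interpret block_embedding W \<delta> p
    using W p \<epsilon> by unfold_locales (auto simp: \<delta>_def)
  have "\<delta> powr (-1 / p) = (1 + \<epsilon>) powr (-p * (-1 / p))"
    unfolding \<delta>_def by (simp add: powr_powr)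
  also have "\<dots> = 1 + \<epsilon>" using p \<epsilon> by simp
  finally have scale: "\<delta> powr (-1 / p) = 1 + \<epsilon>" .
  show ?thesis
    using embed_bounds(1,2) embed_bounds(3)[unfolded scale] embed_linear
    by (intro exI[of _ embed]) simp
qed

definition weighted_integral :: "(real \<Rightarrow> real) \<Rightarrow> real set \<Rightarrow> (real \<Rightarrow> real) \<Rightarrow> real" where
  "weighted_integral W A f = (LINT t:A|lebesgue. f t * W t)"

lemma nn_integral_weighted_le_G_sup:
  assumes W: "W \<in> WeightClass" and A: "A \<subseteq> {0<..}"
  shows "(\<integral>\<^sup>+ t. ennreal (norm (indicator A t *\<^sub>R (f t * W t))) \<partial>lebesgue) \<le> G_sup W 1 f"
proof -
  have "ennreal (norm (indicator A t *\<^sub>R (f t * W t))) \<le> ennreal (\<bar>f t\<bar> powr 1 * W t) * indicator {0<..} t"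
    for t
  proof (cases "t \<in> A")
    case True
    then have "0 < W t" using A WeightClassD(2)[OF W, of t] by auto
    then show ?thesis using True A by (auto simp: abs_mult)
  qed simp
  then have "(\<integral>\<^sup>+ t. ennreal (norm (indicator A t *\<^sub>R (f t * W t))) \<partial>lebesgue)
      \<le> (\<integral>\<^sup>+ t\<in>{0<..}. ennreal (\<bar>f t\<bar> powr 1 * W t) \<partial>lebesgue)"
    by (rule nn_integral_mono)
  also have "\<dots> \<le> G_sup W 1 f" by (rule nn_integral_le_G_sup)
  finally show ?thesis .
qed

lemma set_integrable_weighted:
  assumes W: "W \<in> WeightClass" and f: "f \<in> G_space W 1"
    and A: "A \<in> sets lebesgue" "A \<subseteq> {0<..}"
  shows "set_integrable lebesgue A (\<lambda>t. f t * W t)"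
  unfolding set_integrable_def integrable_iff_bounded
proof
  have "(\<lambda>t. indicator {0<..} t *\<^sub>R f t) \<in> borel_measurable lebesgue"
    using f borel_measurable_restrict_space_iff[of "{0<..} :: real set" lebesgue f]
    unfolding G_space_def by simp
  moreover have "(\<lambda>t. indicator A t *\<^sub>R (f t * W t)) =
      (\<lambda>t. (indicator {0<..} t *\<^sub>R f t) * (W t * indicator A t))"
    using A(2) by (auto simp: fun_eq_iff indicator_def)
  ultimately show "(\<lambda>t. indicator A t *\<^sub>R (f t * W t)) \<in> borel_measurable lebesgue"
    using weight_indicator_measurable[OF W A] by simp
  show "(\<integral>\<^sup>+ t. ennreal (norm (indicator A t *\<^sub>R (f t * W t))) \<partial>lebesgue) < \<infinity>"
    using nn_integral_weighted_le_G_sup[OF W A(2), of f] f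
    unfolding G_space_def by (auto intro: le_less_trans)
qed

lemma weighted_integral_dual:
  assumes W: "W \<in> WeightClass" and A: "A \<in> sets lebesgue" "A \<subseteq> {0<..}"
  shows "weighted_integral W A \<in> dual_space (G_space W 1) (G_norm W 1)"
  unfolding dual_space_def
proof (intro CollectI conjI ballI allI exI[of _ 1])
  fix f g a b assume f: "f \<in> G_space W 1" and g: "g \<in> G_space W 1"
  have "(\<lambda>t. (a * f t + b * g t) * W t) = (\<lambda>t. a * (f t * W t) + b * (g t * W t))"
    by (simp add: fun_eq_iff algebra_simps)
  then show "weighted_integral W A (\<lambda>t. a * f t + b * g t) =
      a * weighted_integral W A f + b * weighted_integral W A g"
    using set_integrable_weighted[OF W f A] set_integrable_weighted[OF W g A]
    unfolding weighted_integral_def by simp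
next
  fix f assume f: "f \<in> G_space W 1"
  have "ennreal \<bar>weighted_integral W A f\<bar> \<le> G_sup W 1 f"
    using integral_norm_bound_ennreal[OF set_integrable_weighted[OF W f A, unfolded set_integrable_def]]
      nn_integral_weighted_le_G_sup[OF W A(2), of f]
    unfolding weighted_integral_def set_lebesgue_integral_def by simp
  moreover have "G_sup W 1 f < top"
    using f unfolding G_space_def by simp
  ultimately have "\<bar>weighted_integral W A f\<bar> \<le> enn2real (G_sup W 1 f)"
    using enn2real_mono by fastforce
  then show "\<bar>weighted_integral W A f\<bar> \<le> 1 * G_norm W 1 f"
    unfolding G_norm_def by simp
qed

lemma weighted_integral_initial_tendsto:
  assumes W: "W \<in> WeightClass" and f: "f \<in> G_space W 1"
  shows "(\<lambda>n. weighted_integral W {0<..real n} f) \<longlonglongrightarrow> weighted_integral W {0<..} f"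
proof -
  have union: "(\<Union>n. {0<..real n}) = ({0<..} :: real set)"
  proof
    show "{0<..} \<subseteq> (\<Union>n. {0<..real n})"
      using real_arch_simple by fastforce
  qed auto
  have "(\<lambda>n. LINT t:{0<..real n}|lebesgue. f t * W t) \<longlonglongrightarrow> (LINT t:(\<Union>n. {0<..real n})|lebesgue. f t * W t)"
    by (rule set_integral_cont_up)
      (auto simp: incseq_def union intro!: set_integrable_weighted[OF W f])
  then show ?thesis
    unfolding weighted_integral_def union .
qed

lemma G_space_1_escaping_sequence:
  assumes W: "W \<in> WeightClass"
  obtains g where "\<And>k. g k \<in> G_space W 1" and "\<And>k. G_norm W 1 (g k) \<le> 1"
    and "\<And>k t. t \<le> real k \<Longrightarrow> g k t = 0"
    and "\<And>k. weighted_integral W {0<..} (g k) = 1 / 2"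
proof -
  interpret block_embedding W "1 / 2" 1
    using W by unfold_locales auto
  define e :: "nat \<Rightarrow> nat \<Rightarrow> real" where "e k n = (if n = k then 1 / 2 else 0)" for k n
  have "(\<lambda>n. \<bar>e k n\<bar> powr 1) = (\<lambda>n. if n = k then 1 / 2 else 0)" for k
    by (simp add: fun_eq_iff e_def)
  then have e_sums: "(\<lambda>n. \<bar>e k n\<bar> powr 1) sums (1 / 2)" for k
    using sums_single[of k "\<lambda>_. 1 / 2 :: real"] by simp
  then have e_lp: "e k \<in> lp_space 1" for k
    unfolding lp_space_def using sums_summable[OF e_sums] by simp
  have e_norm: "lp_norm 1 (e k) = 1 / 2" for k
    unfolding lp_norm_def sums_unique[OF e_sums, symmetric] by simp
  have embed_e: "embed (e k) t = (if t \<in> block k then block_scale k / 2 else 0)" for k t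
  proof (cases "\<exists>j. t \<in> block j")
    case True
    then obtain j where j: "t \<in> block j" ..
    moreover have "t \<in> block k \<longleftrightarrow> j = k"
      using j disjoint_family_block unfolding disjoint_family_on_def by auto
    ultimately show ?thesis by (auto simp: embed_block e_def)
  qed (auto simp: embed_outside)
  have "weighted_integral W {0<..} (embed (e k)) = block_scale k / 2 * block_mass k" for k
  proof -
    have "(\<lambda>t. indicator {0<..} t *\<^sub>R (embed (e k) t * W t)) =
        (\<lambda>t. block_scale k / 2 * (W t * indicator (block k) t))"
      using block_pos[of k] by (auto simp: fun_eq_iff embed_e indicator_def)
    then show ?thesis
      unfolding weighted_integral_def set_lebesgue_integral_def by (simp add: integral_weight_block)
  qed
  moreover have "block_scale k = 1 / block_mass k" for k
    using block_scale_powr[of k] block_scale_pos[of k] by simp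
  ultimately have mass: "weighted_integral W {0<..} (embed (e k)) = 1 / 2" for k
    using block_mass_pos[of k] by simp
  show thesis
  proof (rule that[of "\<lambda>k. embed (e k)"])
    show "embed (e k) \<in> G_space W 1" for k
      by (rule embed_bounds(1)[OF e_lp])
    show "G_norm W 1 (embed (e k)) \<le> 1" for k
      using embed_bounds(3)[OF e_lp, of k] e_norm[of k] by (simp add: powr_minus_divide)
    show "embed (e k) t = 0" if "t \<le> real k" for k t
      using block_gt[of t k] that by (auto simp: embed_e)
  qed (rule mass)
qed

lemma G_norm_nonneg: "0 \<le> G_norm W p f"
  unfolding G_norm_def by simp

lemma abs_le_dual_norm:
  assumes \<phi>: "\<phi> \<in> dual_space V N" and N_nonneg: "\<forall>f\<in>V. 0 \<le> N f"
    and f: "f \<in> V" "N f \<le> 1"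
  shows "\<bar>\<phi> f\<bar> \<le> dual_norm V N \<phi>"
proof -
  obtain C where C: "\<forall>f\<in>V. \<bar>\<phi> f\<bar> \<le> C * N f"
    using \<phi> unfolding dual_space_def by blast
  have "bdd_above ((\<lambda>f. \<bar>\<phi> f\<bar>) ` {f \<in> V. N f \<le> 1})"
  proof (rule bdd_aboveI2)
    fix f assume f: "f \<in> {f \<in> V. N f \<le> 1}"
    have "\<bar>\<phi> f\<bar> \<le> C * N f" using C f by blast
    also have "\<dots> \<le> \<bar>C\<bar> * N f" using N_nonneg f by (intro mult_right_mono) auto
    also have "\<dots> \<le> \<bar>C\<bar>" using f by (simp add: mult_left_le)
    finally show "\<bar>\<phi> f\<bar> \<le> \<bar>C\<bar>" .
  qed
  then show ?thesis
    unfolding dual_norm_def using f by (intro cSup_upper) auto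
qed

lemma dual_space_lincomb:
  assumes \<phi>: "\<phi> \<in> dual_space V N" and \<psi>: "\<psi> \<in> dual_space V N"
    and N_nonneg: "\<forall>f\<in>V. 0 \<le> N f"
  shows "(\<lambda>f. a * \<phi> f + b * \<psi> f) \<in> dual_space V N"
proof -
  obtain C D where C: "\<forall>f\<in>V. \<bar>\<phi> f\<bar> \<le> C * N f" and D: "\<forall>f\<in>V. \<bar>\<psi> f\<bar> \<le> D * N f"
    using \<phi> \<psi> unfolding dual_space_def by blast
  have "\<bar>a * \<phi> f + b * \<psi> f\<bar> \<le> (\<bar>a\<bar> * C + \<bar>b\<bar> * D) * N f" if "f \<in> V" for f
  proof -
    have "\<bar>a * \<phi> f + b * \<psi> f\<bar> \<le> \<bar>a\<bar> * \<bar>\<phi> f\<bar> + \<bar>b\<bar> * \<bar>\<psi> f\<bar>"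
      by (metis abs_mult abs_triangle_ineq)
    also have "\<dots> \<le> \<bar>a\<bar> * (C * N f) + \<bar>b\<bar> * (D * N f)"
      using C D that by (intro add_mono mult_left_mono) auto
    finally show ?thesis by (simp add: algebra_simps)
  qed
  moreover have "a * \<phi> (\<lambda>t. c * f t + d * g t) + b * \<psi> (\<lambda>t. c * f t + d * g t) =
      c * (a * \<phi> f + b * \<psi> f) + d * (a * \<phi> g + b * \<psi> g)" if "f \<in> V" "g \<in> V" for f g c d
    using \<phi> \<psi> that unfolding dual_space_def by (simp add: algebra_simps)
  ultimately show ?thesis
    unfolding dual_space_def by blast
qed

lemma compact_imp_cluster_point:
  fixes X :: "nat \<Rightarrow> 'a::topological_space"
  assumes "compact K" "\<And>k. X k \<in> K"
  shows "\<exists>\<Psi>\<in>K. \<forall>S. closed S \<longrightarrow> eventually (\<lambda>k. X k \<in> S) sequentially \<longrightarrow> \<Psi> \<in> S"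
proof -
  have "filtermap X sequentially \<noteq> bot"
    by (simp add: filtermap_bot_iff)
  moreover have "eventually (\<lambda>y. y \<in> K) (filtermap X sequentially)"
    using assms(2) by (simp add: eventually_filtermap)
  ultimately obtain \<Psi> where "\<Psi> \<in> K" and cluster: "inf (nhds \<Psi>) (filtermap X sequentially) \<noteq> bot"
    using assms(1) unfolding compact_filter by blast
  have "\<Psi> \<in> S" if S: "closed S" "eventually (\<lambda>k. X k \<in> S) sequentially" for S
  proof (rule ccontr)
    assume "\<Psi> \<notin> S"
    then have "eventually (\<lambda>y. y \<in> - S) (nhds \<Psi>)"
      using S(1) by (intro eventually_nhds_in_open) auto
    moreover have "eventually (\<lambda>y. y \<in> S) (filtermap X sequentially)"
      using S(2) by (simp add: eventually_filtermap)
    ultimately have "eventually (\<lambda>_. False) (inf (nhds \<Psi>) (filtermap X sequentially))"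
      unfolding eventually_inf by blast
    with cluster show False
      by (simp add: eventually_False)
  qed
  with \<open>\<Psi> \<in> K\<close> show ?thesis by blast
qed

text \<open>Tychonoff's theorem (\<open>compactin_PiE\<close>) stands in for weak-* compactness of the unit ball
  of the bidual.\<close>
lemma bidual_cluster_point:
  assumes N_nonneg: "\<forall>f\<in>V. 0 \<le> N f"
    and g: "\<And>k. g k \<in> V" "\<And>k. N (g k) \<le> 1"
  shows "\<exists>\<Psi> :: ((real \<Rightarrow> real) \<Rightarrow> real) \<Rightarrow> real.
    (\<forall>\<phi>\<in>dual_space V N. \<forall>\<psi>\<in>dual_space V N. \<forall>a b.
      \<Psi> (\<lambda>f. a * \<phi> f + b * \<psi> f) = a * \<Psi> \<phi> + b * \<Psi> \<psi>)
    \<and> (\<forall>\<phi>\<in>dual_space V N. \<bar>\<Psi> \<phi>\<bar> \<le> dual_norm V N \<phi>)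
    \<and> (\<forall>\<phi>\<in>dual_space V N. \<forall>S. closed S \<longrightarrow>
      eventually (\<lambda>k. \<phi> (g k) \<in> S) sequentially \<longrightarrow> \<Psi> \<phi> \<in> S)"
proof -
  let ?D = "dual_space V N"
  define X where "X k \<phi> = (if \<phi> \<in> ?D then \<phi> (g k) else 0)" for k \<phi>
  define K where "K = Pi\<^sub>E UNIV (\<lambda>\<phi>. if \<phi> \<in> ?D then cball 0 (dual_norm V N \<phi>) else {0 :: real})"
  have "compactin (product_topology (\<lambda>_. euclidean) UNIV) K"
    unfolding K_def compactin_PiE by auto
  then have compact: "compact K"
    by (simp add: euclidean_product_topology)
  have "\<bar>\<phi> (g k)\<bar> \<le> dual_norm V N \<phi>" if "\<phi> \<in> ?D" for \<phi> k
    using abs_le_dual_norm[of \<phi> V N "g k", OF that N_nonneg g(1)[of k] g(2)[of k]] .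
  then have in_K: "X k \<in> K" for k
    unfolding X_def K_def by (simp add: PiE_iff dist_real_def)
  from compact_imp_cluster_point[OF compact in_K] obtain \<Psi> where "\<Psi> \<in> K"
    and cluster: "\<forall>S. closed S \<longrightarrow> eventually (\<lambda>k. X k \<in> S) sequentially \<longrightarrow> \<Psi> \<in> S" ..
  have coordinate: "continuous_on UNIV (\<lambda>\<Psi> :: ((real \<Rightarrow> real) \<Rightarrow> real) \<Rightarrow> real. \<Psi> \<phi>)" for \<phi>
    by (rule continuous_on_product_coordinates)
  have "\<Psi> (\<lambda>f. a * \<phi> f + b * \<psi> f) = a * \<Psi> \<phi> + b * \<Psi> \<psi>" if \<phi>: "\<phi> \<in> ?D" and \<psi>: "\<psi> \<in> ?D" for \<phi> \<psi> a b
  proof -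
    let ?\<chi> = "\<lambda>f. a * \<phi> f + b * \<psi> f"
    let ?C = "{\<Psi>. \<Psi> ?\<chi> = a * \<Psi> \<phi> + b * \<Psi> \<psi>}"
    have "?\<chi> \<in> ?D" by (rule dual_space_lincomb[OF \<phi> \<psi> N_nonneg])
    then have "\<forall>k. X k \<in> ?C"
      using \<phi> \<psi> unfolding X_def by simp
    moreover have "closed ?C"
      by (intro closed_Collect_eq continuous_on_add continuous_on_mult_left coordinate)
    ultimately have "\<Psi> \<in> ?C"
      using cluster always_eventually by blast
    then show ?thesis by simp
  qed
  moreover have "\<bar>\<Psi> \<phi>\<bar> \<le> dual_norm V N \<phi>" if "\<phi> \<in> ?D" for \<phi>
  proof -
    have "\<Psi> \<phi> \<in> (if \<phi> \<in> ?D then cball 0 (dual_norm V N \<phi>) else {0})"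
      using \<open>\<Psi> \<in> K\<close> unfolding K_def PiE_iff by blast
    then show ?thesis using that by (simp add: dist_real_def)
  qed
  moreover have "\<Psi> \<phi> \<in> S"
    if "\<phi> \<in> ?D" "closed S" "eventually (\<lambda>k. \<phi> (g k) \<in> S) sequentially" for \<phi> S
  proof -
    have "closed ((\<lambda>\<Psi>. \<Psi> \<phi>) -` S)"
      by (rule closed_vimage[OF that(2) coordinate])
    moreover have "eventually (\<lambda>k. X k \<in> (\<lambda>\<Psi>. \<Psi> \<phi>) -` S) sequentially"
      using that(1,3) unfolding X_def by simp
    ultimately show ?thesis using cluster by auto
  qed
  ultimately show ?thesis by blast
qed

theorem G_space_1_not_reflexive:
  assumes W: "W \<in> WeightClass"
  shows "\<not> reflexive_space (G_space W 1) (G_norm W 1)"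
proof
  let ?V = "G_space W 1" and ?N = "G_norm W 1"
  assume reflexive: "reflexive_space ?V ?N"
  obtain g where g_in: "\<And>k. g k \<in> ?V" and g_norm: "\<And>k. ?N (g k) \<le> 1"
    and g_zero: "\<And>k t. t \<le> real k \<Longrightarrow> g k t = 0"
    and g_mass: "\<And>k. weighted_integral W {0<..} (g k) = 1 / 2"
    using G_space_1_escaping_sequence[OF W] by blast
  have "\<forall>f\<in>?V. 0 \<le> ?N f" by (simp add: G_norm_nonneg)
  then obtain \<Psi> where linear: "\<forall>\<phi>\<in>dual_space ?V ?N. \<forall>\<psi>\<in>dual_space ?V ?N. \<forall>a b.
      \<Psi> (\<lambda>f. a * \<phi> f + b * \<psi> f) = a * \<Psi> \<phi> + b * \<Psi> \<psi>"
    and bounded: "\<forall>\<phi>\<in>dual_space ?V ?N. \<bar>\<Psi> \<phi>\<bar> \<le> dual_norm ?V ?N \<phi>"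
    and limit: "\<forall>\<phi>\<in>dual_space ?V ?N. \<forall>S. closed S \<longrightarrow>
      eventually (\<lambda>k. \<phi> (g k) \<in> S) sequentially \<longrightarrow> \<Psi> \<phi> \<in> S"
    using bidual_cluster_point[of ?V ?N g] g_in g_norm by blast
  have "\<exists>C. \<forall>\<phi>\<in>dual_space ?V ?N. \<bar>\<Psi> \<phi>\<bar> \<le> C * dual_norm ?V ?N \<phi>"
    using bounded by (intro exI[of _ 1]) simp
  then obtain f where f: "f \<in> ?V" and eval: "\<forall>\<phi>\<in>dual_space ?V ?N. \<Psi> \<phi> = \<phi> f"
    using reflexive linear unfolding reflexive_space_def by blast
  have dual: "weighted_integral W A \<in> dual_space ?V ?N" if "A \<in> sets lebesgue" "A \<subseteq> {0<..}" for A
    by (rule weighted_integral_dual[OF W that])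
  have initial: "weighted_integral W {0<..real n} f = 0" for n
  proof -
    have "weighted_integral W {0<..real n} (g k) = 0" if "n \<le> k" for k
    proof -
      have "(\<lambda>t. indicator {0<..real n} t *\<^sub>R (g k t * W t)) = (\<lambda>t. 0)"
        using g_zero that by (force simp: fun_eq_iff indicator_def)
      then show ?thesis unfolding weighted_integral_def set_lebesgue_integral_def by simp
    qed
    then have "eventually (\<lambda>k. weighted_integral W {0<..real n} (g k) \<in> {0}) sequentially"
      unfolding eventually_sequentially by auto
    moreover have dual_n: "weighted_integral W {0<..real n} \<in> dual_space ?V ?N"
      by (rule dual) auto
    ultimately have "\<Psi> (weighted_integral W {0<..real n}) \<in> {0}"
      using limit closed_singleton by blast
    then show ?thesis using eval dual_n by simp
  qed
  have total: "weighted_integral W {0<..} f = 1 / 2"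
  proof -
    have dual_0: "weighted_integral W {0<..} \<in> dual_space ?V ?N"
      by (rule dual) auto
    moreover have "eventually (\<lambda>k. weighted_integral W {0<..} (g k) \<in> {1 / 2}) sequentially"
      using g_mass by (simp add: always_eventually)
    ultimately have "\<Psi> (weighted_integral W {0<..}) \<in> {1 / 2}"
      using limit closed_singleton by blast
    then show ?thesis using eval dual_0 by simp
  qed
  have "(\<lambda>n. 0 :: real) \<longlonglongrightarrow> 1 / 2"
    using weighted_integral_initial_tendsto[OF W f] unfolding initial total .
  then show False
    by (simp add: LIMSEQ_const_iff)
qed

theorem mainTheorem11:
  fixes p :: real and W :: "real \<Rightarrow> real"
  assumes "1 \<le> p" and "W \<in> WeightClass"
  shows "(\<forall>\<epsilon>>0. \<exists>T :: (nat \<Rightarrow> real) \<Rightarrow> (real \<Rightarrow> real).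
            (\<forall>x\<in>lp_space p. T x \<in> G_space W p)
          \<and> (\<forall>x\<in>lp_space p. \<forall>y\<in>lp_space p. \<forall>a b.
               T (\<lambda>n. a * x n + b * y n) = (\<lambda>t. a * T x t + b * T y t))
          \<and> (\<forall>x\<in>lp_space p. lp_norm p x \<le> G_norm W p (T x)
               \<and> G_norm W p (T x) \<le> (1 + \<epsilon>) * lp_norm p x))
         \<and> \<not> reflexive_space (G_space W 1) (G_norm W 1)"
  using lp_almost_isometric_embedding[OF assms] G_space_1_not_reflexive[OF assms(2)] by blast

end
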